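(* Let $n \geq 2$ be a power of 2. Then $\mathrm{spar}(\mathsf{ADDR}_n) = n^{\log 3}$.
   Context: $\mathsf{ADDR}_n:\{0,1\}^{\log n+n}\to\{0,1\}$ is $\mathsf{ADDR}_n(x,y)=y_{\mathsf{bin}(x)}$ for $x\in\{0,1\}^{\log n}$, $y\in\{0,1\}^n$, where $\mathsf{bin}(x)\in[n]$ is the integer whose binary representation is $x$. $\mathrm{spar}(f)$ (M\"obius sparsity) is the number of nonzero coefficients in the unique expansion $f=\sum_S\widetilde f(S)\prod_{i\in S}z_i$ with real coefficients. Logarithms are base 2. *)

theory Defs
  imports "HOL-Analysis.Analysis"
begin

text \<open>A Boolean function on N variables is modelled as a map from inputs
  x :: nat \<Rightarrow> bool (only coordinates 0..N-1 are relevant) to real numbers.\<close>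

definition inputs :: "nat \<Rightarrow> (nat \<Rightarrow> bool) set" where
  "inputs N = {x. \<forall>i\<ge>N. \<not> x i}"

definition is_mobius_expansion :: "nat \<Rightarrow> ((nat \<Rightarrow> bool) \<Rightarrow> real) \<Rightarrow> (nat set \<Rightarrow> real) \<Rightarrow> bool" where
  "is_mobius_expansion N f c \<longleftrightarrow>
     (\<forall>S. \<not> S \<subseteq> {..<N} \<longrightarrow> c S = 0) \<and>
     (\<forall>x \<in> inputs N. f x = (\<Sum>S\<in>Pow {..<N}. c S * (\<Prod>i\<in>S. (if x i then 1 else 0))))"

definition mobius_coeff :: "nat \<Rightarrow> ((nat \<Rightarrow> bool) \<Rightarrow> real) \<Rightarrow> nat set \<Rightarrow> real" where
  "mobius_coeff N f = (THE c. is_mobius_expansion N f c)"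

definition spar :: "nat \<Rightarrow> ((nat \<Rightarrow> bool) \<Rightarrow> real) \<Rightarrow> nat" where
  "spar N f = card {S. S \<subseteq> {..<N} \<and> mobius_coeff N f S \<noteq> 0}"

text \<open>bin: the integer whose binary representation is the k bits x_0 ... x_{k-1}
  (x_0 most significant), a value in {0..2^k-1}.\<close>
definition bin :: "nat \<Rightarrow> (nat \<Rightarrow> bool) \<Rightarrow> nat" where
  "bin k x = (\<Sum>j<k. (if x j then 2 ^ (k - 1 - j) else 0))"

text \<open>ADDR_n with n = 2^k on k + n variables: variables 0..k-1 are the address
  bits x, variables k..k+n-1 are y_0..y_{n-1}; output y_{bin(x)}.\<close>
definition ADDR :: "nat \<Rightarrow> (nat \<Rightarrow> bool) \<Rightarrow> real" where
  "ADDR k z = (if z (k + bin k z) then 1 else 0)"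

end

theory Submission imports Defs begin

text \<open>Let x be the k address bits. For a \<subseteq> {..<k} the indicator of the address a is
  \<open>[x = a] = (\<Prod>j\<in>a. x\<^sub>j) * (\<Prod>j\<in>{..<k} - a. 1 - x\<^sub>j)\<close>, and \<open>ADDR(x,y) = \<Sum>\<^sub>a y\<^bsub>bin a\<^esub> [x = a]\<close>.
  Expanding the second product, every term is indexed by a pair (A, U) of disjoint subsets of
  {..<k}, namely the address A and a set U of its zero bits, and contributes the monomial
  \<open>x\<^sub>A x\<^sub>U y\<^bsub>bin A\<^esub>\<close> with coefficient \<open>(-1)^|U|\<close>. The index of the y-variable recovers A and
  then the x-part recovers U, so no two terms cancel and the sparsity is the number of such
  pairs, \<open>3^k = n^(log 3)\<close>.\<close>

definition bool_monomial :: "nat set \<Rightarrow> (nat \<Rightarrow> bool) \<Rightarrow> real" where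
  "bool_monomial S x = (\<Prod>i\<in>S. if x i then 1 else 0)"

lemma bool_monomial_eq_indicator:
  "finite S \<Longrightarrow> bool_monomial S x = (if \<forall>i\<in>S. x i then 1 else 0)"
  unfolding bool_monomial_def by (induction S rule: finite_induct) auto

lemma bool_monomial_Un:
  "finite A \<Longrightarrow> finite B \<Longrightarrow> A \<inter> B = {} \<Longrightarrow>
    bool_monomial (A \<union> B) x = bool_monomial A x * bool_monomial B x"
  unfolding bool_monomial_def by (rule prod.union_disjoint)

lemma mobius_expansion_at_indicator:
  assumes "is_mobius_expansion N f c" and "S \<subseteq> {..<N}"
  shows "f (\<lambda>i. i \<in> S) = (\<Sum>T\<in>Pow S. c T)"
proof -
  have fin: "finite T" if "T \<subseteq> {..<N}" for T
    using that finite_subset by blast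
  have "(\<lambda>i. i \<in> S) \<in> inputs N"
    using assms(2) by (auto simp: inputs_def)
  then have "f (\<lambda>i. i \<in> S) = (\<Sum>T\<in>Pow {..<N}. c T * bool_monomial T (\<lambda>i. i \<in> S))"
    using assms(1) by (simp add: is_mobius_expansion_def bool_monomial_def)
  also have "\<dots> = (\<Sum>T\<in>Pow {..<N}. if T \<subseteq> S then c T else 0)"
    by (intro sum.cong refl) (auto simp: bool_monomial_eq_indicator fin subset_iff)
  also have "\<dots> = (\<Sum>T\<in>Pow S. c T)"
    using assms(2) by (intro sum.mono_neutral_cong_right) auto
  finally show ?thesis .
qed

lemma mobius_expansion_unique:
  assumes c: "is_mobius_expansion N f c" and c': "is_mobius_expansion N f c'"
  shows "c = c'"
proof
  have "c S = c' S" if "S \<subseteq> {..<N}" for S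
    using that
  proof (induction "card S" arbitrary: S rule: less_induct)
    case less
    have fin: "finite S"
      using less.prems finite_subset by blast
    have "(\<Sum>T\<in>Pow S - {S}. c T) = (\<Sum>T\<in>Pow S - {S}. c' T)"
      using less fin by (intro sum.cong refl) (auto intro: psubset_card_mono)
    moreover have "c S + (\<Sum>T\<in>Pow S - {S}. c T) = c' S + (\<Sum>T\<in>Pow S - {S}. c' T)"
      using mobius_expansion_at_indicator[OF c less.prems]
        mobius_expansion_at_indicator[OF c' less.prems] fin
      by (simp add: sum.remove[of "Pow S" S])
    ultimately show ?case
      by simp
  qed
  then show "c S = c' S" for S
    using c c' by (cases "S \<subseteq> {..<N}") (auto simp: is_mobius_expansion_def)
qed

lemma mobius_coeff_eqI:
  "is_mobius_expansion N f c \<Longrightarrow> mobius_coeff N f = c"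
  unfolding mobius_coeff_def by (blast intro: the_equality mobius_expansion_unique)

lemma spar_eq_card_if_distinct_monomials:
  fixes g :: "'a \<Rightarrow> nat set" and w :: "'a \<Rightarrow> real"
  assumes "finite P" and "inj_on g P" and "\<And>p. p \<in> P \<Longrightarrow> g p \<subseteq> {..<N}"
    and "\<And>p. p \<in> P \<Longrightarrow> w p \<noteq> 0"
    and "\<And>x. x \<in> inputs N \<Longrightarrow> f x = (\<Sum>p\<in>P. w p * bool_monomial (g p) x)"
  shows "spar N f = card P"
proof -
  define c where "c S = (\<Sum>p\<in>{p\<in>P. g p = S}. w p)" for S
  have c_image: "c (g p) = w p" if "p \<in> P" for p
  proof -
    have "{q\<in>P. g q = g p} = {p}"
      using assms(2) that by (auto dest: inj_onD)
    then show ?thesis by (simp add: c_def)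
  qed
  have c_outside: "c S = 0" if "S \<notin> g ` P" for S
    using that by (auto simp: c_def intro: sum.neutral)
  have "is_mobius_expansion N f c"
    unfolding is_mobius_expansion_def
  proof (intro conjI allI impI ballI)
    show "c S = 0" if "\<not> S \<subseteq> {..<N}" for S
      using that assms(3) by (intro c_outside) blast
  next
    fix x assume x: "x \<in> inputs N"
    have "(\<Sum>S\<in>Pow {..<N}. c S * (\<Prod>i\<in>S. if x i then 1 else 0)) =
          (\<Sum>S\<in>Pow {..<N}. \<Sum>p\<in>{p\<in>P. g p = S}. w p * bool_monomial (g p) x)"
      by (auto simp: c_def bool_monomial_def sum_distrib_right intro: sum.cong)
    also have "\<dots> = (\<Sum>p\<in>P. w p * bool_monomial (g p) x)"
      using assms(1,3) by (intro sum.group) auto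
    finally show "f x = (\<Sum>S\<in>Pow {..<N}. c S * (\<Prod>i\<in>S. if x i then 1 else 0))"
      using assms(5)[OF x] by simp
  qed
  then have "{S. S \<subseteq> {..<N} \<and> mobius_coeff N f S \<noteq> 0} = g ` P"
    using mobius_coeff_eqI c_image c_outside assms(3,4) by fastforce
  then show ?thesis
    unfolding spar_def using card_image[OF assms(2)] by simp
qed

lemma bin_Suc: "bin (Suc k) x = 2 * bin k x + (if x k then 1 else 0)"
proof -
  have "(\<Sum>j<k. (if x j then 2 ^ (k - j) else 0::nat)) =
        (\<Sum>j<k. 2 * (if x j then 2 ^ (k - 1 - j) else 0))"
    by (intro sum.cong refl) (auto simp: Suc_diff_Suc simp flip: power_Suc)
  then show ?thesis
    by (simp add: bin_def sum_distrib_left cong: if_cong)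
qed

lemma bin_less: "bin k x < 2 ^ k"
proof (induction k)
  case (Suc k)
  then show ?case by (simp add: bin_Suc)
qed (simp add: bin_def)

lemma bin_cong: "(\<And>j. j < k \<Longrightarrow> x j = y j) \<Longrightarrow> bin k x = bin k y"
  unfolding bin_def by (intro sum.cong) auto

lemma bin_eq_imp_eq: "bin k x = bin k y \<Longrightarrow> j < k \<Longrightarrow> x j = y j"
proof (induction k arbitrary: j)
  case (Suc k)
  have eq: "2 * bin k x + (if x k then 1 else 0) = 2 * bin k y + (if y k then 1 else 0)"
    using Suc.prems(1) unfolding bin_Suc .
  then have "x k = y k"
    by (cases "x k"; cases "y k") presburger+
  with eq Suc show ?case
    by (cases "j = k") auto
qed simp

lemma inj_on_bin_Pow: "inj_on (\<lambda>A. bin k (\<lambda>j. j \<in> A)) (Pow {..<k})"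
  by (rule inj_onI) (auto dest: bin_eq_imp_eq)

definition addr_terms :: "nat \<Rightarrow> (nat set \<times> nat set) set" where
  "addr_terms k = (SIGMA A:Pow {..<k}. Pow ({..<k} - A))"

definition addr_monomial :: "nat \<Rightarrow> nat set \<times> nat set \<Rightarrow> nat set" where
  "addr_monomial k = (\<lambda>(A, U). insert (k + bin k (\<lambda>j. j \<in> A)) (A \<union> U))"

lemma card_disjoint_subset_pairs:
  assumes "finite M"
  shows "card (SIGMA A:Pow M. Pow (M - A)) = 3 ^ card M"
proof -
  have "card (SIGMA A:Pow M. Pow (M - A)) = (\<Sum>A\<in>Pow M. (\<Prod>i\<in>A. 1) * (\<Prod>i\<in>M - A. 2::nat))"
    using assms by (simp add: card_Pow finite_subset)
  also have "\<dots> = (\<Prod>i\<in>M. 1 + 2)"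
    using prod_add[OF assms, of "\<lambda>_. 1" "\<lambda>_. 2::nat"] by simp
  finally show ?thesis
    by (simp add: numeral_3_eq_3)
qed

lemma card_addr_terms: "card (addr_terms k) = 3 ^ k"
  unfolding addr_terms_def by (subst card_disjoint_subset_pairs) simp_all

lemma addr_monomial_subset: "p \<in> addr_terms k \<Longrightarrow> addr_monomial k p \<subseteq> {..<k + 2 ^ k}"
  using bin_less by (auto simp: addr_terms_def addr_monomial_def)

lemma inj_on_addr_monomial: "inj_on (addr_monomial k) (addr_terms k)"
proof (rule inj_onI)
  fix p q assume p: "p \<in> addr_terms k" and q: "q \<in> addr_terms k"
    and eq: "addr_monomial k p = addr_monomial k q"
  obtain A U A' U' where pq: "p = (A, U)" "q = (A', U')"
    by fastforce
  have AU: "A \<subseteq> {..<k}" "U \<subseteq> {..<k} - A" "A' \<subseteq> {..<k}" "U' \<subseteq> {..<k} - A'"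
    using p q pq by (auto simp: addr_terms_def)
  have "addr_monomial k p - {..<k} = addr_monomial k q - {..<k}"
    using eq by simp
  then have "bin k (\<lambda>j. j \<in> A) = bin k (\<lambda>j. j \<in> A')"
    using AU by (auto simp: addr_monomial_def pq)
  then have "A = A'"
    using inj_on_bin_Pow AU by (auto dest: inj_onD)
  moreover have "addr_monomial k p \<inter> {..<k} = addr_monomial k q \<inter> {..<k}"
    using eq by simp
  then have "A \<union> U = A' \<union> U'"
    using AU by (auto simp: addr_monomial_def pq)
  ultimately show "p = q"
    using AU pq by blast
qed

lemma bool_monomial_mult_prod_one_minus:
  assumes "finite M" and "A \<subseteq> M"
  shows "bool_monomial A x * (\<Prod>i\<in>M - A. 1 - (if x i then 1 else 0)) =
    (if A = {j\<in>M. x j} then 1 else 0)"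
proof -
  have "finite A"
    using assms finite_subset by blast
  moreover have "(\<Prod>i\<in>M - A. 1 - (if x i then 1 else 0::real)) =
      (if \<forall>i\<in>M - A. \<not> x i then 1 else 0)"
    using assms(1) by (auto simp: prod_zero_iff intro: prod.neutral)
  ultimately show ?thesis
    using assms(2) by (auto simp: bool_monomial_eq_indicator)
qed

lemma ADDR_expansion:
  "ADDR k x = (\<Sum>p\<in>addr_terms k. (-1) ^ card (snd p) * bool_monomial (addr_monomial k p) x)"
proof -
  define M where "M = {..<k}"
  define a where "a A = k + bin k (\<lambda>j. j \<in> A)" for A
  define Z where "Z = {j\<in>M. x j}"
  have fin: "finite M" "\<And>A. A \<subseteq> M \<Longrightarrow> finite A"
    using finite_subset by (auto simp: M_def)
  have "(\<Sum>p\<in>addr_terms k. (-1) ^ card (snd p) * bool_monomial (addr_monomial k p) x) =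
    (\<Sum>A\<in>Pow M. \<Sum>U\<in>Pow (M - A). (-1) ^ card U * bool_monomial (insert (a A) (A \<union> U)) x)"
    using fin by (simp add: addr_terms_def addr_monomial_def sum.Sigma M_def a_def split_def)
  also have "\<dots> = (\<Sum>A\<in>Pow M. bool_monomial {a A} x * (bool_monomial A x *
      (\<Sum>U\<in>Pow (M - A). (-1) ^ card U * bool_monomial U x)))"
  proof (intro sum.cong refl)
    fix A assume "A \<in> Pow M"
    have "bool_monomial (insert (a A) (A \<union> U)) x =
        bool_monomial {a A} x * (bool_monomial A x * bool_monomial U x)" if "U \<in> Pow (M - A)" for U
    proof -
      have "finite A" "finite U" "a A \<notin> A \<union> U" "A \<inter> U = {}"
        using \<open>A \<in> Pow M\<close> that by (auto simp: a_def M_def intro: finite_subset)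
      then show ?thesis
        using bool_monomial_Un[of "{a A}" "A \<union> U" x] bool_monomial_Un[of A U x] by simp
    qed
    then show "(\<Sum>U\<in>Pow (M - A). (-1) ^ card U * bool_monomial (insert (a A) (A \<union> U)) x) =
      bool_monomial {a A} x * (bool_monomial A x *
        (\<Sum>U\<in>Pow (M - A). (-1) ^ card U * bool_monomial U x))"
      by (simp add: sum_distrib_left mult_ac)
  qed
  also have "\<dots> = (\<Sum>A\<in>Pow M. bool_monomial {a A} x *
      (bool_monomial A x * (\<Prod>i\<in>M - A. 1 - (if x i then 1 else 0))))"
    using fin by (simp add: prod_diff_conv_sum bool_monomial_def)
  also have "\<dots> = (\<Sum>A\<in>Pow M. if A = Z then bool_monomial {a A} x else 0)"
    using fin by (intro sum.cong refl) (simp add: bool_monomial_mult_prod_one_minus Z_def)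
  also have "\<dots> = bool_monomial {a Z} x"
    using fin by (simp add: Z_def)
  also have "\<dots> = ADDR k x"
  proof -
    have "bin k x = bin k (\<lambda>j. j \<in> Z)"
      by (rule bin_cong) (simp add: Z_def M_def)
    then show ?thesis
      by (simp add: ADDR_def a_def bool_monomial_def)
  qed
  finally show ?thesis ..
qed

lemma pow_powr_log:
  fixes b c :: real
  assumes "b > 0" and "b \<noteq> 1" and "c > 0"
  shows "(b ^ k) powr log b c = c ^ k"
proof -
  have "(b ^ k) powr log b c = b powr (log b c * real k)"
    using assms by (simp add: powr_realpow[symmetric] powr_powr mult.commute)
  also have "\<dots> = c ^ k"
    using assms by (simp add: powr_powr[symmetric] powr_realpow)
  finally show ?thesis .
qed

theorem claimA3:
  fixes n k :: nat
  assumes "n \<ge> 2" and "n = 2 ^ k"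
  shows "real (spar (k + n) (ADDR k)) = real n powr log 2 3"
proof -
  have "spar (k + n) (ADDR k) = card (addr_terms k)"
    using assms(2) addr_monomial_subset inj_on_addr_monomial ADDR_expansion
    by (intro spar_eq_card_if_distinct_monomials[where w = "\<lambda>p. (-1) ^ card (snd p)"])
      (auto simp: addr_terms_def)
  also have "\<dots> = 3 ^ k"
    by (rule card_addr_terms)
  finally show ?thesis
    using pow_powr_log[of 2 3 k] assms(2) by simp
qed

end
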